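(* Let $K\subseteq\mathbb{R}^m$ be closed, $f:\mathbb{R}^n\to\mathbb{R}$ and $G:\mathbb{R}^n\to\mathbb{R}^m$ be locally Lipschitz continuous and second-order directionally differentiable at $x^*$, and let $x^*$ be a locally optimal solution of the problem $\min f(x)$ s.t. $G(x)\in K$, with feasible set $\Psi=\{x:G(x)\in K\}$. Then: (i) for every $d\in\mathcal{T}_\Psi(x^* )$ with $f'(x^*;d)\le0$ and all $w\in\mathcal{T}^2_\Psi(x^*;d)$, one has $f''(x^*;d,w)\ge0$; (ii) if MSCQ for $\Psi$ holds at $x^*$, then for every $d\in\mathcal{C}(x^* ):=\{d\in\mathbb{R}^n: G'(x^*;d)\in\mathcal{T}_K(G(x^* )),\ f'(x^*;d)\le0\}$ and all $w\in\mathbb{R}^n$ satisfying $G''(x^*;d,w)\in\mathcal{T}^2_K(G(x^* );G'(x^*;d))$, one has $f''(x^*;d,w)\ge0$.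
   Context: Definitions. For $g:\mathbb{R}^n\to\mathbb{R}^k$: $g'(x;d)=\lim_{t\downarrow0}(g(x+td)-g(x))/t$; $g$ is second-order directionally differentiable at $x$ if for every $d$, $g'(x;d)$ exists and $g''(x;d,w):=\lim_{t\downarrow0}\frac{g(x+td+\frac12t^2w)-g(x)-tg'(x;d)}{\frac12t^2}$ exists for all $w$. For a set $C$ and $x^*\in C$: tangent cone $\mathcal{T}_C(x^* )=\{d:\exists t_k\downarrow0,d^k\to d,x^*+t_kd^k\in C\}$; outer second-order tangent set $\mathcal{T}^2_C(x^*;d)=\{w:\exists t_k\downarrow0,w^k\to w,x^*+t_kd+\frac12t_k^2w^k\in C\}$. MSCQ for $\Psi$ holds at $x^*$ if there exist a neighborhood $U$ of $x^*$ and $\kappa>0$ with $\mathrm{dist}(x,\Psi)\le\kappa\,\mathrm{dist}(G(x),K)$ for all $x\in U$. *)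

theory Defs
  imports "HOL-Analysis.Analysis"
begin

definition has_dir_deriv :: "('a::real_normed_vector \<Rightarrow> 'b::real_normed_vector) \<Rightarrow> 'a \<Rightarrow> 'a \<Rightarrow> 'b \<Rightarrow> bool" where
  "has_dir_deriv g x d v \<longleftrightarrow>
     ((\<lambda>t. (1 / t) *\<^sub>R (g (x + t *\<^sub>R d) - g x)) \<longlongrightarrow> v) (at_right (0::real))"

definition dir_deriv :: "('a::real_normed_vector \<Rightarrow> 'b::real_normed_vector) \<Rightarrow> 'a \<Rightarrow> 'a \<Rightarrow> 'b" where
  "dir_deriv g x d = (THE v. has_dir_deriv g x d v)"

definition has_dir_deriv2 :: "('a::real_normed_vector \<Rightarrow> 'b::real_normed_vector) \<Rightarrow> 'a \<Rightarrow> 'a \<Rightarrow> 'a \<Rightarrow> 'b \<Rightarrow> bool" where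
  "has_dir_deriv2 g x d w v \<longleftrightarrow>
     ((\<lambda>t. (2 / t\<^sup>2) *\<^sub>R (g (x + t *\<^sub>R d + ((1/2) * t\<^sup>2) *\<^sub>R w) - g x - t *\<^sub>R dir_deriv g x d)) \<longlongrightarrow> v)
       (at_right (0::real))"

definition dir_deriv2 :: "('a::real_normed_vector \<Rightarrow> 'b::real_normed_vector) \<Rightarrow> 'a \<Rightarrow> 'a \<Rightarrow> 'a \<Rightarrow> 'b" where
  "dir_deriv2 g x d w = (THE v. has_dir_deriv2 g x d w v)"

definition second_order_dir_diff :: "('a::real_normed_vector \<Rightarrow> 'b::real_normed_vector) \<Rightarrow> 'a \<Rightarrow> bool" where
  "second_order_dir_diff g x \<longleftrightarrow>
     (\<forall>d. (\<exists>v. has_dir_deriv g x d v) \<and> (\<forall>w. \<exists>v. has_dir_deriv2 g x d w v))"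

definition locally_lipschitz :: "('a::metric_space \<Rightarrow> 'b::metric_space) \<Rightarrow> bool" where
  "locally_lipschitz g \<longleftrightarrow>
     (\<forall>x. \<exists>U L. open U \<and> x \<in> U \<and> (\<forall>y\<in>U. \<forall>z\<in>U. dist (g y) (g z) \<le> L * dist y z))"

definition tangent_cone :: "'a::real_normed_vector set \<Rightarrow> 'a \<Rightarrow> 'a set" where
  "tangent_cone C x = {d. \<exists>t dk. (\<forall>k. t k > 0) \<and> t \<longlonglongrightarrow> 0 \<and> dk \<longlonglongrightarrow> d \<and>
                                 (\<forall>k. x + t k *\<^sub>R dk k \<in> C)}"

definition second_tangent_set :: "'a::real_normed_vector set \<Rightarrow> 'a \<Rightarrow> 'a \<Rightarrow> 'a set" where
  "second_tangent_set C x d = {w. \<exists>t wk. (\<forall>k. t k > 0) \<and> t \<longlonglongrightarrow> 0 \<and> wk \<longlonglongrightarrow> w \<and>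
                                 (\<forall>k. x + t k *\<^sub>R d + ((1/2) * (t k)\<^sup>2) *\<^sub>R wk k \<in> C)}"

definition MSCQ :: "('a::real_normed_vector \<Rightarrow> 'b::real_normed_vector) \<Rightarrow> 'b set \<Rightarrow> 'a \<Rightarrow> bool" where
  "MSCQ G K xs \<longleftrightarrow> (\<exists>U \<kappa>. open U \<and> xs \<in> U \<and> \<kappa> > 0 \<and>
      (\<forall>x\<in>U. infdist x {y. G y \<in> K} \<le> \<kappa> * infdist (G x) K))"

definition local_min_on :: "('a::metric_space \<Rightarrow> real) \<Rightarrow> 'a set \<Rightarrow> 'a \<Rightarrow> bool" where
  "local_min_on f S xs \<longleftrightarrow> xs \<in> S \<and> (\<exists>e>0. \<forall>x\<in>S. dist x xs < e \<longrightarrow> f xs \<le> f x)"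

end

theory Submission
  imports Defs
begin

text \<open>
  (i) Take \<open>t\<^sub>k \<down> 0\<close> and \<open>w\<^sub>k \<rightarrow> w\<close> with \<open>x\<^sup>* + t\<^sub>k d + t\<^sub>k\<^sup>2 w\<^sub>k / 2 \<in> \<Psi>\<close>. These points are
  feasible and tend to \<open>x\<^sup>*\<close>, so their \<open>f\<close>-values are at least \<open>f(x\<^sup>*)\<close>; since
  \<open>f'(x\<^sup>*;d) \<le> 0\<close>, the second-order difference quotients built with \<open>w\<^sub>k\<close> are nonnegative.
  By local Lipschitz continuity of \<open>f\<close> they have the same limit as those built with
  \<open>w\<close>, namely \<open>f''(x\<^sup>*;d,w)\<close>.

  (ii) reduces to (i). Along a sequence witnessing
  \<open>G''(x\<^sup>*;d,w) \<in> \<T>\<^sup>2\<^sub>K(G(x\<^sup>*);G'(x\<^sup>*;d))\<close>, the point \<open>G(x\<^sup>* + t\<^sub>k d + t\<^sub>k\<^sup>2 w / 2)\<close> is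
  within \<open>o(t\<^sub>k\<^sup>2)\<close> of \<open>K\<close>, so by MSCQ the point \<open>x\<^sup>* + t\<^sub>k d + t\<^sub>k\<^sup>2 w / 2\<close> is within
  \<open>o(t\<^sub>k\<^sup>2)\<close> of \<open>\<Psi>\<close>, which means \<open>w \<in> \<T>\<^sup>2\<^sub>\<Psi>(x\<^sup>*;d)\<close>.
\<close>

lemma has_dir_deriv2_dir_deriv2:
  assumes "second_order_dir_diff g x"
  shows "has_dir_deriv2 g x d w (dir_deriv2 g x d w)"
proof -
  obtain v where v: "has_dir_deriv2 g x d w v"
    using assms unfolding second_order_dir_diff_def by blast
  have "u = v" if "has_dir_deriv2 g x d w u" for u
    using that v unfolding has_dir_deriv2_def
    by (rule tendsto_unique[OF trivial_limit_at_right_real])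
  with v show ?thesis
    unfolding dir_deriv2_def by (metis theI)
qed

lemma has_dir_deriv2_sequentially:
  assumes "has_dir_deriv2 g x d w v" and "\<forall>k. t k > 0" and "t \<longlonglongrightarrow> 0"
  shows "(\<lambda>k. (2 / (t k)\<^sup>2) *\<^sub>R
            (g (x + t k *\<^sub>R d + ((1/2) * (t k)\<^sup>2) *\<^sub>R w) - g x - t k *\<^sub>R dir_deriv g x d)) \<longlonglongrightarrow> v"
proof -
  have "filterlim t (at_right 0) sequentially"
    using assms(2,3) by (intro tendsto_imp_filterlim_at_right) auto
  with assms(1) show ?thesis
    unfolding has_dir_deriv2_def by (rule filterlim_compose)
qed

lemma second_order_curve_tendsto:
  fixes x d :: "'a::real_normed_vector"
  assumes "t \<longlonglongrightarrow> 0" and "wk \<longlonglongrightarrow> w"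
  shows "(\<lambda>k. x + t k *\<^sub>R d + ((1/2) * (t k)\<^sup>2) *\<^sub>R wk k) \<longlonglongrightarrow> x"
proof -
  have "(\<lambda>k. x + t k *\<^sub>R d + ((1/2) * (t k)\<^sup>2) *\<^sub>R wk k) \<longlonglongrightarrow> x + 0 *\<^sub>R d + ((1/2) * 0\<^sup>2) *\<^sub>R w"
    by (intro tendsto_intros assms)
  then show ?thesis by simp
qed

lemma locally_lipschitz_scaled_diff_tendsto_zero:
  fixes g :: "'a::metric_space \<Rightarrow> 'b::real_normed_vector"
  assumes lip: "locally_lipschitz g" and "y \<longlonglongrightarrow> x" "p \<longlonglongrightarrow> x"
    and c: "\<forall>k. c k \<ge> 0" and "(\<lambda>k. c k * dist (y k) (p k)) \<longlonglongrightarrow> 0"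
  shows "(\<lambda>k. c k *\<^sub>R (g (y k) - g (p k))) \<longlonglongrightarrow> 0"
proof -
  obtain U L where U: "open U" "x \<in> U"
    and L: "\<And>y z. y \<in> U \<Longrightarrow> z \<in> U \<Longrightarrow> dist (g y) (g z) \<le> L * dist y z"
    using lip[unfolded locally_lipschitz_def, rule_format, of x] by blast
  have "\<forall>\<^sub>F k in sequentially. y k \<in> U"
    using \<open>y \<longlonglongrightarrow> x\<close> U by (rule topological_tendstoD)
  moreover have "\<forall>\<^sub>F k in sequentially. p k \<in> U"
    using \<open>p \<longlonglongrightarrow> x\<close> U by (rule topological_tendstoD)
  ultimately have "\<forall>\<^sub>F k in sequentially.
      norm (c k *\<^sub>R (g (y k) - g (p k))) \<le> L * (c k * dist (y k) (p k))"
  proof eventually_elim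
    case (elim k)
    have "norm (c k *\<^sub>R (g (y k) - g (p k))) = c k * dist (g (y k)) (g (p k))"
      using c by (simp add: dist_norm)
    also have "\<dots> \<le> c k * (L * dist (y k) (p k))"
      using L elim c by (simp add: mult_left_mono)
    finally show ?case
      by (simp add: algebra_simps)
  qed
  moreover have "(\<lambda>k. L * (c k * dist (y k) (p k))) \<longlonglongrightarrow> 0"
    using tendsto_mult_right_zero[OF assms(5)] .
  ultimately show ?thesis
    by (rule Lim_null_comparison)
qed

lemma has_dir_deriv2_lipschitz_sequentially:
  fixes g :: "'a::real_normed_vector \<Rightarrow> 'b::real_normed_vector"
  assumes lip: "locally_lipschitz g" and g2: "has_dir_deriv2 g x d w v"
    and t: "\<forall>k. t k > 0" "t \<longlonglongrightarrow> 0" and wk: "wk \<longlonglongrightarrow> w"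
  shows "(\<lambda>k. (2 / (t k)\<^sup>2) *\<^sub>R
            (g (x + t k *\<^sub>R d + ((1/2) * (t k)\<^sup>2) *\<^sub>R wk k) - g x - t k *\<^sub>R dir_deriv g x d)) \<longlonglongrightarrow> v"
proof -
  define y where "y k = x + t k *\<^sub>R d + ((1/2) * (t k)\<^sup>2) *\<^sub>R wk k" for k
  define p where "p k = x + t k *\<^sub>R d + ((1/2) * (t k)\<^sup>2) *\<^sub>R w" for k
  have "y \<longlonglongrightarrow> x"
    unfolding y_def by (rule second_order_curve_tendsto[OF t(2) wk])
  moreover have "p \<longlonglongrightarrow> x"
    unfolding p_def by (rule second_order_curve_tendsto[OF t(2) tendsto_const])
  moreover have "\<forall>k. 2 / (t k)\<^sup>2 \<ge> 0"
    by simp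
  moreover have "(\<lambda>k. 2 / (t k)\<^sup>2 * dist (y k) (p k)) \<longlonglongrightarrow> 0"
  proof -
    have "y k - p k = ((1/2) * (t k)\<^sup>2) *\<^sub>R (wk k - w)" for k
      by (simp add: y_def p_def algebra_simps)
    then have "2 / (t k)\<^sup>2 * dist (y k) (p k) = norm (wk k - w)" for k
      using t(1)[rule_format, of k] by (simp add: dist_norm)
    then show ?thesis
      using tendsto_norm_zero[OF LIM_zero[OF wk]] by simp
  qed
  ultimately have "(\<lambda>k. (2 / (t k)\<^sup>2) *\<^sub>R (g (y k) - g (p k))) \<longlonglongrightarrow> 0"
    by (rule locally_lipschitz_scaled_diff_tendsto_zero[OF lip])
  then have "(\<lambda>k. (2 / (t k)\<^sup>2) *\<^sub>R (g (y k) - g x - t k *\<^sub>R dir_deriv g x d)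
                - (2 / (t k)\<^sup>2) *\<^sub>R (g (p k) - g x - t k *\<^sub>R dir_deriv g x d)) \<longlonglongrightarrow> 0"
    by (simp add: algebra_simps)
  from Lim_transform[OF has_dir_deriv2_sequentially[OF g2 t] this[unfolded p_def]]
  show ?thesis
    unfolding y_def .
qed

lemma local_min_on_dir_deriv2_nonneg:
  fixes f :: "'a::real_normed_vector \<Rightarrow> real"
  assumes lip: "locally_lipschitz f" and f2: "has_dir_deriv2 f x d w v"
    and descent: "dir_deriv f x d \<le> 0" and min: "local_min_on f S x"
    and w: "w \<in> second_tangent_set S x d"
  shows "0 \<le> v"
proof -
  obtain t wk where t: "\<forall>k. t k > 0" "t \<longlonglongrightarrow> 0" and wk: "wk \<longlonglongrightarrow> w"
    and feasible: "\<forall>k. x + t k *\<^sub>R d + ((1/2) * (t k)\<^sup>2) *\<^sub>R wk k \<in> S"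
    using w unfolding second_tangent_set_def by blast
  obtain e where "e > 0" and e: "\<And>y. y \<in> S \<Longrightarrow> dist y x < e \<Longrightarrow> f x \<le> f y"
    using min unfolding local_min_on_def by blast
  define y where "y k = x + t k *\<^sub>R d + ((1/2) * (t k)\<^sup>2) *\<^sub>R wk k" for k
  have "y \<longlonglongrightarrow> x"
    unfolding y_def by (rule second_order_curve_tendsto[OF t(2) wk])
  then have "\<forall>\<^sub>F k in sequentially. dist (y k) x < e"
    using \<open>e > 0\<close> by (rule tendstoD)
  then have "\<forall>\<^sub>F k in sequentially. 0 \<le> (2 / (t k)\<^sup>2) *\<^sub>R (f (y k) - f x - t k *\<^sub>R dir_deriv f x d)"
  proof eventually_elim
    case (elim k)
    have "f x \<le> f (y k)"
      using e feasible elim unfolding y_def by blast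
    moreover have "t k * dir_deriv f x d \<le> 0"
      using t(1)[rule_format, of k] descent by (simp add: mult_nonneg_nonpos)
    ultimately show ?case by simp
  qed
  with has_dir_deriv2_lipschitz_sequentially[OF lip f2 t wk] show ?thesis
    unfolding y_def by (rule tendsto_lowerbound) simp
qed

lemma ex_dist_less_infdist_add:
  fixes p :: "'a::metric_space"
  assumes "S \<noteq> {}" and "\<epsilon> > 0"
  shows "\<exists>z\<in>S. dist p z < infdist p S + \<epsilon>"
proof -
  have "bdd_below ((\<lambda>z. dist p z) ` S)"
    by (rule bdd_belowI[of _ 0]) auto
  moreover have "(INF z\<in>S. dist p z) < infdist p S + \<epsilon>"
    using assms by (simp add: infdist_notempty)
  ultimately show ?thesis
    using cINF_less_iff[OF assms(1)] by blast
qed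

lemma second_tangent_setI_infdist:
  fixes x d w :: "'a::real_normed_vector"
  assumes "S \<noteq> {}" and t: "\<forall>k. t k > 0" "t \<longlonglongrightarrow> 0"
    and dist_o: "(\<lambda>k. infdist (x + t k *\<^sub>R d + ((1/2) * (t k)\<^sup>2) *\<^sub>R w) S / (t k)\<^sup>2) \<longlonglongrightarrow> 0"
  shows "w \<in> second_tangent_set S x d"
proof -
  define p where "p k = x + t k *\<^sub>R d + ((1/2) * (t k)\<^sup>2) *\<^sub>R w" for k
  \<comment> \<open>The infimum need not be attained; the slack \<open>t\<^sub>k\<^sup>3\<close> is \<open>o(t\<^sub>k\<^sup>2)\<close>.\<close>
  have "\<forall>k. \<exists>z\<in>S. dist (p k) z < infdist (p k) S + (t k)^3"
    using t by (intro allI ex_dist_less_infdist_add[OF \<open>S \<noteq> {}\<close>]) simp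
  then obtain z where z: "\<And>k. z k \<in> S" "\<And>k. dist (p k) (z k) < infdist (p k) S + (t k)^3"
    by metis
  define wk where "wk k = (2 / (t k)\<^sup>2) *\<^sub>R (z k - x - t k *\<^sub>R d)" for k
  have curve: "x + t k *\<^sub>R d + ((1/2) * (t k)\<^sup>2) *\<^sub>R wk k = z k" for k
    using t(1)[rule_format, of k] by (simp add: wk_def)
  have bound: "norm (wk k - w) \<le> 2 * (infdist (p k) S / (t k)\<^sup>2) + 2 * t k" for k
  proof -
    have tk: "t k > 0" using t by simp
    have "(2 / (t k)\<^sup>2) *\<^sub>R (z k - p k)
        = wk k - (2 / (t k)\<^sup>2) *\<^sub>R (((1/2) * (t k)\<^sup>2) *\<^sub>R w)"
      by (simp add: wk_def p_def algebra_simps)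
    also have "(2 / (t k)\<^sup>2) *\<^sub>R (((1/2) * (t k)\<^sup>2) *\<^sub>R w) = w"
      using tk by simp
    finally have "wk k - w = (2 / (t k)\<^sup>2) *\<^sub>R (z k - p k)" ..
    then have "norm (wk k - w) = (2 / (t k)\<^sup>2) * dist (p k) (z k)"
      by (simp add: dist_norm norm_minus_commute)
    also have "\<dots> \<le> (2 / (t k)\<^sup>2) * (infdist (p k) S + (t k)^3)"
      using z(2)[of k] by (intro mult_left_mono) auto
    also have "\<dots> = 2 * (infdist (p k) S / (t k)\<^sup>2) + 2 * t k"
      using tk by (simp add: field_simps power2_eq_square power3_eq_cube)
    finally show ?thesis .
  qed
  have "(\<lambda>k. 2 * (infdist (p k) S / (t k)\<^sup>2) + 2 * t k) \<longlonglongrightarrow> 0"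
    using tendsto_add[OF tendsto_mult_right_zero[OF dist_o] tendsto_mult_right_zero[OF t(2)]]
    unfolding p_def by simp
  with always_eventually[OF allI[OF bound]] have "(\<lambda>k. wk k - w) \<longlonglongrightarrow> 0"
    by (rule Lim_null_comparison)
  then have "wk \<longlonglongrightarrow> w"
    by (rule LIM_zero_cancel)
  moreover have "\<forall>k. x + t k *\<^sub>R d + ((1/2) * (t k)\<^sup>2) *\<^sub>R wk k \<in> S"
    using curve z(1) by simp
  ultimately show ?thesis
    using t unfolding second_tangent_set_def by blast
qed

lemma second_order_infdist_tendsto_zero:
  fixes y D :: "'a::real_normed_vector"
  assumes t: "\<forall>k. t k > 0" and "r \<longlonglongrightarrow> a" and "vk \<longlonglongrightarrow> a"
    and inK: "\<forall>k. y + t k *\<^sub>R D + ((1/2) * (t k)\<^sup>2) *\<^sub>R vk k \<in> K"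
  shows "(\<lambda>k. infdist (y + t k *\<^sub>R D + ((1/2) * (t k)\<^sup>2) *\<^sub>R r k) K / (t k)\<^sup>2) \<longlonglongrightarrow> 0"
proof -
  have bound: "norm (infdist (y + t k *\<^sub>R D + ((1/2) * (t k)\<^sup>2) *\<^sub>R r k) K / (t k)\<^sup>2)
      \<le> 1/2 * norm (r k - vk k)" for k
  proof -
    have "infdist (y + t k *\<^sub>R D + ((1/2) * (t k)\<^sup>2) *\<^sub>R r k) K
        \<le> dist (y + t k *\<^sub>R D + ((1/2) * (t k)\<^sup>2) *\<^sub>R r k) (y + t k *\<^sub>R D + ((1/2) * (t k)\<^sup>2) *\<^sub>R vk k)"
      using inK by (intro infdist_le) blast
    also have "\<dots> = (1/2) * (t k)\<^sup>2 * norm (r k - vk k)"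
      by (simp add: dist_norm flip: scaleR_diff_right)
    finally show ?thesis
      using t(1)[rule_format, of k] by (simp add: infdist_nonneg field_simps)
  qed
  have "(\<lambda>k. r k - vk k) \<longlonglongrightarrow> 0"
    using tendsto_diff[OF \<open>r \<longlonglongrightarrow> a\<close> \<open>vk \<longlonglongrightarrow> a\<close>] by simp
  then have "(\<lambda>k. 1/2 * norm (r k - vk k)) \<longlonglongrightarrow> 0"
    by (intro tendsto_mult_right_zero tendsto_norm_zero)
  with always_eventually[OF allI[OF bound]] show ?thesis
    by (rule Lim_null_comparison)
qed

lemma MSCQ_second_tangent_set:
  fixes G :: "'a::real_normed_vector \<Rightarrow> 'b::real_normed_vector"
  assumes mscq: "MSCQ G K x" and "G x \<in> K" and G2: "has_dir_deriv2 G x d w a"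
    and a: "a \<in> second_tangent_set K (G x) (dir_deriv G x d)"
  shows "w \<in> second_tangent_set {y. G y \<in> K} x d"
proof -
  define D where "D = dir_deriv G x d"
  obtain t vk where t: "\<forall>k. t k > 0" "t \<longlonglongrightarrow> 0" and vk: "vk \<longlonglongrightarrow> a"
    and inK: "\<forall>k. G x + t k *\<^sub>R D + ((1/2) * (t k)\<^sup>2) *\<^sub>R vk k \<in> K"
    using a unfolding second_tangent_set_def D_def by blast
  obtain U \<kappa> where U: "open U" "x \<in> U" and "\<kappa> > 0"
    and subregular: "\<And>y. y \<in> U \<Longrightarrow> infdist y {y. G y \<in> K} \<le> \<kappa> * infdist (G y) K"
    using mscq unfolding MSCQ_def by blast
  define p where "p k = x + t k *\<^sub>R d + ((1/2) * (t k)\<^sup>2) *\<^sub>R w" for k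
  define r where "r k = (2 / (t k)\<^sup>2) *\<^sub>R (G (p k) - G x - t k *\<^sub>R D)" for k
  have "r \<longlonglongrightarrow> a"
    unfolding r_def p_def D_def by (rule has_dir_deriv2_sequentially[OF G2 t])
  have "G (p k) = G x + t k *\<^sub>R D + ((1/2) * (t k)\<^sup>2) *\<^sub>R r k" for k
    using t(1)[rule_format, of k] by (simp add: r_def)
  then have G_close: "(\<lambda>k. infdist (G (p k)) K / (t k)\<^sup>2) \<longlonglongrightarrow> 0"
    using second_order_infdist_tendsto_zero[OF t(1) \<open>r \<longlonglongrightarrow> a\<close> vk inK] by simp
  have "p \<longlonglongrightarrow> x"
    unfolding p_def by (rule second_order_curve_tendsto[OF t(2) tendsto_const])
  then have "\<forall>\<^sub>F k in sequentially. p k \<in> U"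
    using U by (rule topological_tendstoD)
  then have "\<forall>\<^sub>F k in sequentially.
      norm (infdist (p k) {y. G y \<in> K} / (t k)\<^sup>2) \<le> \<kappa> * (infdist (G (p k)) K / (t k)\<^sup>2)"
    by eventually_elim (simp add: infdist_nonneg divide_right_mono subregular)
  moreover have "(\<lambda>k. \<kappa> * (infdist (G (p k)) K / (t k)\<^sup>2)) \<longlonglongrightarrow> 0"
    using tendsto_mult_right_zero[OF G_close] .
  ultimately have "(\<lambda>k. infdist (p k) {y. G y \<in> K} / (t k)\<^sup>2) \<longlonglongrightarrow> 0"
    by (rule Lim_null_comparison)
  moreover have "{y. G y \<in> K} \<noteq> {}"
    using \<open>G x \<in> K\<close> by blast
  ultimately show ?thesis
    using t unfolding p_def by (intro second_tangent_setI_infdist) auto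
qed

theorem theorem3p2:
  fixes f :: "'n::euclidean_space \<Rightarrow> real"
    and G :: "'n \<Rightarrow> 'm::euclidean_space"
    and K :: "'m set"
    and xs :: 'n
  assumes "closed K"
    and "locally_lipschitz f" and "locally_lipschitz G"
    and "second_order_dir_diff f xs" and "second_order_dir_diff G xs"
    and "local_min_on f {x. G x \<in> K} xs"
  shows "(\<forall>d \<in> tangent_cone {x. G x \<in> K} xs. dir_deriv f xs d \<le> 0 \<longrightarrow>
            (\<forall>w \<in> second_tangent_set {x. G x \<in> K} xs d. dir_deriv2 f xs d w \<ge> 0))
       \<and> (MSCQ G K xs \<longrightarrow>
            (\<forall>d \<in> {d. dir_deriv G xs d \<in> tangent_cone K (G xs) \<and> dir_deriv f xs d \<le> 0}.
               \<forall>w. dir_deriv2 G xs d w \<in> second_tangent_set K (G xs) (dir_deriv G xs d)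
                   \<longrightarrow> dir_deriv2 f xs d w \<ge> 0))"
proof -
  have necessary: "dir_deriv2 f xs d w \<ge> 0"
    if "dir_deriv f xs d \<le> 0" and "w \<in> second_tangent_set {x. G x \<in> K} xs d" for d w
    using local_min_on_dir_deriv2_nonneg[OF assms(2) has_dir_deriv2_dir_deriv2[OF assms(4)]
        that(1) assms(6) that(2)] .
  have "G xs \<in> K"
    using assms(6) unfolding local_min_on_def by simp
  show ?thesis
  proof (intro conjI ballI impI allI)
    fix d w
    assume "dir_deriv f xs d \<le> 0" and "w \<in> second_tangent_set {x. G x \<in> K} xs d"
    then show "dir_deriv2 f xs d w \<ge> 0" by (rule necessary)
  next
    fix d w
    assume mscq: "MSCQ G K xs"
      and d: "d \<in> {d. dir_deriv G xs d \<in> tangent_cone K (G xs) \<and> dir_deriv f xs d \<le> 0}"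
      and w: "dir_deriv2 G xs d w \<in> second_tangent_set K (G xs) (dir_deriv G xs d)"
    have "w \<in> second_tangent_set {x. G x \<in> K} xs d"
      using MSCQ_second_tangent_set[OF mscq \<open>G xs \<in> K\<close> has_dir_deriv2_dir_deriv2[OF assms(5)] w] .
    with d show "dir_deriv2 f xs d w \<ge> 0"
      by (intro necessary) auto
  qed
qed

end
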